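(* If $(M,(I,O))$ is a left-connected oriented map with root $r$, then every vertex of $M$ not containing $r$ is incident to a half-edge in $I$, and every face of $M$ not containing $r$ is incident to a half-edge in $O$.
   Context: A map is $M=(H,\sigma,\alpha)$ with $H$ finite, $\alpha$ a fixed-point-free involution, $\sigma$ a permutation, $\langle\sigma,\alpha\rangle$ transitive, with root $r\in H$. Vertices are cycles of $\sigma$, faces are cycles of $\phi=\sigma\alpha$ ($\phi(h)=\sigma(\alpha(h))$); a half-edge is incident to a vertex/face if it belongs to the cycle. An orientation is a partition $H=I\uplus O$ with $\alpha(I)=O$. A left-path is a sequence $h_1,\dots,h_k$ of half-edges in $I$ such that, with $h_0=r$, for each $j$ there is $q_j>0$ with $h_{j-1}=\sigma^{q_j}(\alpha(h_j))$ and $\sigma^p(\alpha(h_j))\in O$ for $p=0,\dots,q_j-1$. The oriented map is left-connected if every half-edge of $I$ is the last element of a left-path. *)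

theory Defs
  imports Main
begin

text \<open>A rooted map (H, sigma, alpha) with root r. Functions are only relevant on H.\<close>
definition is_rooted_map :: "'a set \<Rightarrow> ('a \<Rightarrow> 'a) \<Rightarrow> ('a \<Rightarrow> 'a) \<Rightarrow> 'a \<Rightarrow> bool" where
  "is_rooted_map H \<sigma> \<alpha> r \<longleftrightarrow>
     finite H \<and> bij_betw \<sigma> H H \<and> bij_betw \<alpha> H H \<and>
     (\<forall>h\<in>H. \<alpha> h \<noteq> h \<and> \<alpha> (\<alpha> h) = h) \<and>
     (\<forall>x\<in>H. \<forall>y\<in>H. (x, y) \<in> ({(z, \<sigma> z) | z. z \<in> H} \<union> {(z, \<alpha> z) | z. z \<in> H})\<^sup>*) \<and>
     r \<in> H"

text \<open>The cycle of a permutation f containing h (vertices: f = sigma; faces: f = phi).\<close>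
definition cycle_of :: "('a \<Rightarrow> 'a) \<Rightarrow> 'a \<Rightarrow> 'a set" where
  "cycle_of f h = {(f ^^ n) h | n. True}"

definition face_perm :: "('a \<Rightarrow> 'a) \<Rightarrow> ('a \<Rightarrow> 'a) \<Rightarrow> 'a \<Rightarrow> 'a" where
  "face_perm \<sigma> \<alpha> h = \<sigma> (\<alpha> h)"

definition orientation :: "'a set \<Rightarrow> ('a \<Rightarrow> 'a) \<Rightarrow> 'a set \<Rightarrow> 'a set \<Rightarrow> bool" where
  "orientation H \<alpha> Inn Out \<longleftrightarrow> Inn \<union> Out = H \<and> Inn \<inter> Out = {} \<and> \<alpha> ` Inn = Out"

text \<open>Left-path h_1..h_k (list hs, hs!j = h_(j+1)), with h_0 = r.\<close>
definition left_path :: "('a \<Rightarrow> 'a) \<Rightarrow> ('a \<Rightarrow> 'a) \<Rightarrow> 'a \<Rightarrow> 'a set \<Rightarrow> 'a set \<Rightarrow> 'a list \<Rightarrow> bool" where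
  "left_path \<sigma> \<alpha> r Inn Out hs \<longleftrightarrow>
     set hs \<subseteq> Inn \<and>
     (\<forall>j < length hs. \<exists>q > 0. (r # hs) ! j = (\<sigma> ^^ q) (\<alpha> (hs ! j)) \<and>
                               (\<forall>p < q. (\<sigma> ^^ p) (\<alpha> (hs ! j)) \<in> Out))"

definition left_connected :: "('a \<Rightarrow> 'a) \<Rightarrow> ('a \<Rightarrow> 'a) \<Rightarrow> 'a \<Rightarrow> 'a set \<Rightarrow> 'a set \<Rightarrow> bool" where
  "left_connected \<sigma> \<alpha> r Inn Out \<longleftrightarrow>
     (\<forall>h\<in>Inn. \<exists>hs. hs \<noteq> [] \<and> left_path \<sigma> \<alpha> r Inn Out hs \<and> last hs = h)"

end

theory Submission
  imports Defs
begin

text \<open>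
  Vertices: if a vertex avoiding r had all its half-edges in O, take one of them, h.
  Then \<alpha> h is in I, and the last step of a left-path ending at \<alpha> h starts from
  some \<sigma>^q h, which lies on the vertex of h and is either r or in I.

  Faces: if a face F avoiding r had all its half-edges in I, follow a left-path ending
  in F backwards.  A step to h_j in F with q > 1 would pass through
  \<sigma> (\<alpha> h_j) = \<phi> h_j, which is in F and would have to be in O; so q = 1 and
  h_(j-1) = \<phi> h_j is in F again.  Hence r = h_0 lies on F.
\<close>

lemma funpow_in_cycle_of: "(f ^^ n) h \<in> cycle_of f h"
  unfolding cycle_of_def by blast

lemma self_in_cycle_of: "h \<in> cycle_of f h"
  using funpow_in_cycle_of[where n = 0] by simp

lemma cycle_of_closed:
  assumes "x \<in> cycle_of f h"
  shows "f x \<in> cycle_of f h"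
proof -
  from assms obtain n where "x = (f ^^ n) h"
    unfolding cycle_of_def by blast
  then have "f x = (f ^^ Suc n) h" by simp
  then show ?thesis using funpow_in_cycle_of by metis
qed

lemma hd_in_if_last_in:
  assumes "xs \<noteq> []" "last xs \<in> C"
    and "\<And>j. Suc j < length xs \<Longrightarrow> xs ! Suc j \<in> C \<Longrightarrow> xs ! j \<in> C"
  shows "hd xs \<in> C"
  using assms
proof (induction xs)
  case Nil
  then show ?case by simp
next
  case (Cons x ys)
  show ?case
  proof (cases "ys = []")
    case True
    then show ?thesis using Cons.prems(2) by simp
  next
    case False
    have "hd ys \<in> C"
      using Cons.IH[OF False] Cons.prems(2,3) False by fastforce
    then have "(x # ys) ! Suc 0 \<in> C" using False by (simp add: hd_conv_nth)
    then show ?thesis using Cons.prems(3)[of 0] False by simp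
  qed
qed

lemma left_path_step_in_vertex:
  assumes "left_path \<sigma> \<alpha> r Inn Out hs" "j < length hs"
  shows "(r # hs) ! j \<in> cycle_of \<sigma> (\<alpha> (hs ! j))"
  using assms funpow_in_cycle_of unfolding left_path_def by metis

lemma left_path_step_stays_in:
  assumes "left_path \<sigma> \<alpha> r Inn Out hs" "j < length hs"
    and closed: "\<And>x. x \<in> F \<Longrightarrow> face_perm \<sigma> \<alpha> x \<in> F"
    and disj: "F \<inter> Out = {}"
    and "hs ! j \<in> F"
  shows "(r # hs) ! j \<in> F"
proof -
  obtain q where q: "q > 0" "(r # hs) ! j = (\<sigma> ^^ q) (\<alpha> (hs ! j))"
    and out: "\<forall>p < q. (\<sigma> ^^ p) (\<alpha> (hs ! j)) \<in> Out"
    using assms(1,2) unfolding left_path_def by blast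
  have in_F: "\<sigma> (\<alpha> (hs ! j)) \<in> F"
    using closed[OF \<open>hs ! j \<in> F\<close>] by (simp add: face_perm_def)
  have "q = 1"
  proof (rule ccontr)
    assume "q \<noteq> 1"
    with q(1) have "1 < q" by simp
    with out have "(\<sigma> ^^ 1) (\<alpha> (hs ! j)) \<in> Out" by blast
    with in_F disj show False by auto
  qed
  then show ?thesis using q(2) in_F by simp
qed

lemma vertex_meets_Inn:
  assumes inv: "\<And>x. x \<in> H \<Longrightarrow> \<alpha> (\<alpha> x) = x"
    and orient: "orientation H \<alpha> Inn Out"
    and lc: "left_connected \<sigma> \<alpha> r Inn Out"
    and "h \<in> H" "r \<notin> cycle_of \<sigma> h"
  shows "\<exists>h' \<in> cycle_of \<sigma> h. h' \<in> Inn"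
proof (cases "h \<in> Inn")
  case True
  then show ?thesis using self_in_cycle_of[of h \<sigma>] by blast
next
  case False
  from orient have "Inn \<union> Out = H" "\<alpha> ` Inn = Out"
    unfolding orientation_def by auto
  with False \<open>h \<in> H\<close> obtain x where "x \<in> Inn" "h = \<alpha> x" by blast
  with inv \<open>Inn \<union> Out = H\<close> have "\<alpha> h \<in> Inn" by auto
  then obtain hs where hs: "hs \<noteq> []" "left_path \<sigma> \<alpha> r Inn Out hs" "last hs = \<alpha> h"
    using lc unfolding left_connected_def by blast
  define j where "j = length hs - 1"
  have j: "j < length hs" "hs ! j = \<alpha> h"
    using hs by (auto simp: j_def last_conv_nth)
  have "\<alpha> (hs ! j) = h" using j(2) inv \<open>h \<in> H\<close> by simp
  then have "(r # hs) ! j \<in> cycle_of \<sigma> h"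
    using left_path_step_in_vertex[OF hs(2) j(1)] by simp
  moreover have "(r # hs) ! j \<in> insert r Inn"
  proof -
    have "(r # hs) ! j \<in> set (r # hs)" using j(1) by (intro nth_mem) simp
    then show ?thesis using hs(2) unfolding left_path_def by auto
  qed
  ultimately show ?thesis using \<open>r \<notin> cycle_of \<sigma> h\<close> by auto
qed

lemma face_meets_Out:
  assumes orient: "orientation H \<alpha> Inn Out"
    and lc: "left_connected \<sigma> \<alpha> r Inn Out"
    and "h \<in> H" "r \<notin> cycle_of (face_perm \<sigma> \<alpha>) h"
  shows "\<exists>h' \<in> cycle_of (face_perm \<sigma> \<alpha>) h. h' \<in> Out"
proof (rule ccontr)
  let ?F = "cycle_of (face_perm \<sigma> \<alpha>) h"
  assume "\<not> ?thesis"
  then have disj: "?F \<inter> Out = {}" by blast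
  moreover have "h \<in> ?F" by (rule self_in_cycle_of)
  ultimately have "h \<in> Inn"
    using \<open>h \<in> H\<close> orient unfolding orientation_def by blast
  then obtain hs where hs: "hs \<noteq> []" "left_path \<sigma> \<alpha> r Inn Out hs" "last hs = h"
    using lc unfolding left_connected_def by blast
  have "hd (r # hs) \<in> ?F"
  proof (rule hd_in_if_last_in)
    show "last (r # hs) \<in> ?F" using hs self_in_cycle_of by simp
    show "(r # hs) ! j \<in> ?F" if "Suc j < length (r # hs)" "(r # hs) ! Suc j \<in> ?F" for j
      using left_path_step_stays_in[OF hs(2) _ cycle_of_closed disj] that by simp
  qed simp
  with \<open>r \<notin> ?F\<close> show False by simp
qed

theorem mainTheorem10:
  assumes "is_rooted_map H \<sigma> \<alpha> r"
    and "orientation H \<alpha> Inn Out"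
    and "left_connected \<sigma> \<alpha> r Inn Out"
  shows "(\<forall>h\<in>H. r \<notin> cycle_of \<sigma> h \<longrightarrow> (\<exists>h'\<in>cycle_of \<sigma> h. h' \<in> Inn)) \<and>
         (\<forall>h\<in>H. r \<notin> cycle_of (face_perm \<sigma> \<alpha>) h \<longrightarrow> (\<exists>h'\<in>cycle_of (face_perm \<sigma> \<alpha>) h. h' \<in> Out))"
proof -
  have inv: "\<And>x. x \<in> H \<Longrightarrow> \<alpha> (\<alpha> x) = x"
    using assms(1) unfolding is_rooted_map_def by blast
  show ?thesis
    using vertex_meets_Inn[OF inv assms(2,3)] face_meets_Out[OF assms(2,3)] by blast
qed

end
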